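(* Let $G=(K\cup I,E)$ be a split graph and $(V,\mathcal{F})$ the split graph vertex shelling antimatroid defined on $G$. Let $i\in I$. Then every $i$-feasible set $F$ satisfies $\operatorname{fos}(i)\subseteq F$.
   Context: A split graph $G=(K\cup I,E)$ is a finite simple graph whose vertex set $V=K\cup I$ comes with a fixed partition into a clique $K$ and an independent set $I$. We write $u\sim v$ for adjacency, and for $F\subseteq V$, $N(F)$ is the set of vertices of $V\setminus F$ adjacent to some vertex of $F$; $N(v)=N(\{v\})$. A vertex is simplicial if its neighbours induce a clique. The split graph vertex shelling antimatroid of $G$ is $(V,\mathcal{F})$ where $F\subseteq V$ is feasible iff there is an ordering $f_1,\dots,f_{|F|}$ of $F$ such that each $f_j$ is simplicial in $G$ minus $\{f_1,\dots,f_{j-1}\}$ (the empty set is feasible). For $i\in I$, a feasible set $F$ is $i$-feasible if $i\in N(F)$. The forced set of $i\in I$ is $\operatorname{fos}(i)=\{k\in K: k\not\sim i\}\cup\{i'\in I: N(i')\not\subseteq N(i)\}$. *)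

theory Defs
  imports Main
begin

definition split_graph :: "'a set \<Rightarrow> 'a set \<Rightarrow> ('a \<Rightarrow> 'a \<Rightarrow> bool) \<Rightarrow> bool" where
  "split_graph K I adj \<longleftrightarrow>
     finite (K \<union> I) \<and> K \<inter> I = {} \<and>
     (\<forall>u v. adj u v \<longrightarrow> u \<in> K \<union> I \<and> v \<in> K \<union> I) \<and>
     (\<forall>u v. adj u v \<longrightarrow> adj v u) \<and>
     (\<forall>v. \<not> adj v v) \<and>
     (\<forall>u\<in>K. \<forall>v\<in>K. u \<noteq> v \<longrightarrow> adj u v) \<and>
     (\<forall>u\<in>I. \<forall>v\<in>I. \<not> adj u v)"

definition nbhd :: "'a set \<Rightarrow> ('a \<Rightarrow> 'a \<Rightarrow> bool) \<Rightarrow> 'a set \<Rightarrow> 'a set" where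
  "nbhd V adj F = {v \<in> V - F. \<exists>f\<in>F. adj f v}"

definition simplicial_in :: "'a set \<Rightarrow> ('a \<Rightarrow> 'a \<Rightarrow> bool) \<Rightarrow> 'a \<Rightarrow> bool" where
  "simplicial_in W adj v \<longleftrightarrow> v \<in> W \<and>
     (\<forall>x\<in>W. \<forall>y\<in>W. adj v x \<and> adj v y \<and> x \<noteq> y \<longrightarrow> adj x y)"

definition shelling_feasible :: "'a set \<Rightarrow> 'a set \<Rightarrow> ('a \<Rightarrow> 'a \<Rightarrow> bool) \<Rightarrow> 'a set \<Rightarrow> bool" where
  "shelling_feasible K I adj F \<longleftrightarrow>
     (\<exists>xs. distinct xs \<and> set xs = F \<and>
        (\<forall>j < length xs. simplicial_in ((K \<union> I) - set (take j xs)) adj (xs ! j)))"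

definition i_feasible :: "'a set \<Rightarrow> 'a set \<Rightarrow> ('a \<Rightarrow> 'a \<Rightarrow> bool) \<Rightarrow> 'a \<Rightarrow> 'a set \<Rightarrow> bool" where
  "i_feasible K I adj i F \<longleftrightarrow> shelling_feasible K I adj F \<and> i \<in> nbhd (K \<union> I) adj F"

definition fos :: "'a set \<Rightarrow> 'a set \<Rightarrow> ('a \<Rightarrow> 'a \<Rightarrow> bool) \<Rightarrow> 'a \<Rightarrow> 'a set" where
  "fos K I adj i = {k \<in> K. \<not> adj k i} \<union>
     {i' \<in> I. \<not> (nbhd (K \<union> I) adj {i'} \<subseteq> nbhd (K \<union> I) adj {i})}"

end

theory Submission
  imports Defs
begin

text \<open>Fix \<open>f \<in> F\<close> adjacent to \<open>i\<close>; since \<open>I\<close> is independent, \<open>f \<in> K\<close>. When \<open>f\<close> is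
  shelled, \<open>i\<close> and all vertices outside \<open>F\<close> are still present, so any two of them that are
  adjacent to \<open>f\<close> are adjacent to each other. Hence every clique vertex outside \<open>F\<close> is adjacent
  to \<open>i\<close>. Now let \<open>i' \<in> I\<close> have a neighbour \<open>v\<close> not adjacent to \<open>i\<close>, so \<open>v \<in> K \<inter> F\<close>.
  If \<open>f\<close> is shelled before \<open>v\<close>, then \<open>v \<sim> i\<close>; if \<open>v\<close> is shelled first and \<open>i' \<notin> F\<close>, then
  \<open>f \<sim> i'\<close>, and therefore \<open>i \<sim> i'\<close>, contradicting the independence of \<open>I\<close>.\<close>

lemma nth_notin_set_take:
  assumes "distinct xs" "a \<le> b" "b < length xs"
  shows "xs ! b \<notin> set (take a xs)"
  using assms by (auto simp: in_set_conv_nth distinct_conv_nth)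

lemma shelling_feasible_pair_simplicial:
  assumes "shelling_feasible K I adj F" "u \<in> F" "w \<in> F"
  obtains W where "K \<union> I - F \<subseteq> W" "u \<in> W" "w \<in> W"
    "simplicial_in W adj u \<or> simplicial_in W adj w"
proof -
  from assms(1) obtain xs where xs: "distinct xs" "set xs = F"
    and shelled: "\<And>j. j < length xs \<Longrightarrow> simplicial_in (K \<union> I - set (take j xs)) adj (xs ! j)"
    unfolding shelling_feasible_def by blast
  obtain a b where ab: "a < length xs" "b < length xs" "xs ! a = u" "xs ! b = w"
    using assms(2,3) xs(2) by (auto simp: in_set_conv_nth)
  define W where "W = K \<union> I - set (take (min a b) xs)"
  have "K \<union> I - F \<subseteq> W"
    unfolding W_def using set_take_subset[of "min a b" xs] xs(2) by (intro Diff_mono) auto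
  moreover have "xs ! d \<in> W" if "min a b \<le> d" "d < length xs" for d
    using shelled[OF that(2)] nth_notin_set_take[OF xs(1) that]
    unfolding W_def simplicial_in_def by blast
  then have "u \<in> W" "w \<in> W"
    using ab by auto
  moreover have "simplicial_in W adj u \<or> simplicial_in W adj w"
    using shelled[OF ab(1)] shelled[OF ab(2)] unfolding W_def ab(3,4)[symmetric]
    by (cases "a \<le> b") (simp_all add: min_def)
  ultimately show thesis
    by (rule that)
qed

lemma simplicial_in_neighbours_adjacent:
  assumes "simplicial_in W adj v" "x \<in> W" "y \<in> W" "adj v x" "adj v y" "x \<noteq> y"
  shows "adj x y"
  using assms unfolding simplicial_in_def by blast

lemma shelling_feasible_outside_neighbours_adjacent:
  assumes "shelling_feasible K I adj F" "f \<in> F"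
    and "y \<in> K \<union> I - F" "z \<in> K \<union> I - F" "adj f y" "adj f z" "y \<noteq> z"
  shows "adj y z"
proof -
  obtain W where W: "K \<union> I - F \<subseteq> W" "simplicial_in W adj f"
    using shelling_feasible_pair_simplicial[OF assms(1,2,2)] by blast
  show ?thesis
    using simplicial_in_neighbours_adjacent[OF W(2) _ _ assms(5-7)] W(1) assms(3,4) by blast
qed

lemma i_feasibleD:
  assumes "i_feasible K I adj i F"
  shows "shelling_feasible K I adj F" "i \<in> K \<union> I - F"
  using assms unfolding i_feasible_def nbhd_def by auto

context
  fixes K I :: "'a set" and adj :: "'a \<Rightarrow> 'a \<Rightarrow> bool"
  assumes split: "split_graph K I adj"
begin

lemma split_graph_disjoint: "K \<inter> I = {}"
  using split unfolding split_graph_def by simp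

lemma split_graph_adj_vertices: "adj u v \<Longrightarrow> u \<in> K \<union> I \<and> v \<in> K \<union> I"
  using split unfolding split_graph_def by simp

lemma split_graph_adj_sym: "adj u v \<Longrightarrow> adj v u"
  using split unfolding split_graph_def by simp

lemma split_graph_clique: "u \<in> K \<Longrightarrow> v \<in> K \<Longrightarrow> u \<noteq> v \<Longrightarrow> adj u v"
  using split unfolding split_graph_def by simp

lemma split_graph_independent: "u \<in> I \<Longrightarrow> v \<in> I \<Longrightarrow> \<not> adj u v"
  using split unfolding split_graph_def by simp

lemma i_feasible_clique_neighbour:
  assumes "i \<in> I" "i_feasible K I adj i F"
  obtains f where "f \<in> F" "f \<in> K" "adj f i"
proof -
  from assms(2) obtain f where "f \<in> F" "adj f i"
    unfolding i_feasible_def nbhd_def by blast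
  moreover have "f \<in> K"
    using split_graph_adj_vertices[OF \<open>adj f i\<close>] split_graph_independent[OF _ assms(1)]
      \<open>adj f i\<close> by blast
  ultimately show thesis
    using that by blast
qed

lemma i_feasible_contains_clique_nonneighbour:
  assumes "i \<in> I" "i_feasible K I adj i F" "k \<in> K" "\<not> adj k i"
  shows "k \<in> F"
proof (rule ccontr)
  assume "k \<notin> F"
  obtain f where f: "f \<in> F" "f \<in> K" "adj f i"
    using i_feasible_clique_neighbour[OF assms(1,2)] .
  have "adj f k"
    using split_graph_clique[OF f(2) assms(3)] f(1) \<open>k \<notin> F\<close> by blast
  moreover have "k \<noteq> i"
    using assms(1,3) split_graph_disjoint by blast
  moreover have "k \<in> K \<union> I - F"
    using assms(3) \<open>k \<notin> F\<close> by blast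
  ultimately have "adj k i"
    using shelling_feasible_outside_neighbours_adjacent[OF i_feasibleD(1)[OF assms(2)] f(1)
        _ i_feasibleD(2)[OF assms(2)] _ f(3)] by blast
  with assms(4) show False ..
qed

lemma i_feasible_contains_undominated:
  assumes "i \<in> I" "i_feasible K I adj i F" "x \<in> I"
    and "\<not> nbhd (K \<union> I) adj {x} \<subseteq> nbhd (K \<union> I) adj {i}"
  shows "x \<in> F"
proof (rule ccontr)
  assume "x \<notin> F"
  note feasible = i_feasibleD(1)[OF assms(2)] and i_outside = i_feasibleD(2)[OF assms(2)]
  obtain v where "adj x v" "v = i \<or> \<not> adj i v"
    using assms(4) split_graph_adj_vertices unfolding nbhd_def by blast
  moreover have "v \<noteq> i"
    using split_graph_independent[OF assms(3,1)] \<open>adj x v\<close> by blast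
  ultimately have "\<not> adj i v"
    by blast
  have v: "v \<in> K" "\<not> adj v i"
    using split_graph_adj_vertices[OF \<open>adj x v\<close>] split_graph_independent[OF assms(3)]
      \<open>adj x v\<close> \<open>\<not> adj i v\<close> split_graph_adj_sym by blast+
  then have "v \<in> F"
    using i_feasible_contains_clique_nonneighbour[OF assms(1,2)] by blast
  obtain f where f: "f \<in> F" "f \<in> K" "adj f i"
    using i_feasible_clique_neighbour[OF assms(1,2)] .
  have "f \<noteq> v" "v \<noteq> f" "f \<noteq> x"
    using f v assms(3) split_graph_disjoint by auto
  have "x \<in> K \<union> I - F" "x \<noteq> i"
    using assms(3) \<open>x \<notin> F\<close> \<open>adj x v\<close> \<open>\<not> adj i v\<close> by auto
  obtain W where W: "K \<union> I - F \<subseteq> W" "f \<in> W" "v \<in> W"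
    and first: "simplicial_in W adj f \<or> simplicial_in W adj v"
    using shelling_feasible_pair_simplicial[OF feasible f(1) \<open>v \<in> F\<close>] by blast
  have "i \<in> W" "x \<in> W"
    using W(1) i_outside \<open>x \<in> K \<union> I - F\<close> by blast+
  from first show False
  proof
    assume f_first: "simplicial_in W adj f"
    have "adj v i"
      using simplicial_in_neighbours_adjacent[OF f_first W(3) \<open>i \<in> W\<close>
          split_graph_clique[OF f(2) v(1) \<open>f \<noteq> v\<close>] f(3) \<open>v \<noteq> i\<close>] .
    with v(2) show False ..
  next
    assume v_first: "simplicial_in W adj v"
    have "adj f x"
      using simplicial_in_neighbours_adjacent[OF v_first W(2) \<open>x \<in> W\<close>
          split_graph_clique[OF v(1) f(2) \<open>v \<noteq> f\<close>] split_graph_adj_sym[OF \<open>adj x v\<close>]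
          \<open>f \<noteq> x\<close>] .
    then have "adj x i"
      using shelling_feasible_outside_neighbours_adjacent[OF feasible f(1)
          \<open>x \<in> K \<union> I - F\<close> i_outside _ f(3) \<open>x \<noteq> i\<close>] by blast
    with split_graph_independent[OF assms(3,1)] show False ..
  qed
qed

end

theorem mainTheorem7:
  fixes K I :: "'a set" and adj :: "'a \<Rightarrow> 'a \<Rightarrow> bool" and i :: 'a and F :: "'a set"
  assumes "split_graph K I adj"
    and "i \<in> I"
    and "i_feasible K I adj i F"
  shows "fos K I adj i \<subseteq> F"
  using i_feasible_contains_clique_nonneighbour[OF assms]
    i_feasible_contains_undominated[OF assms]
  unfolding fos_def by blast

end
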